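(* Let $N\ge 1$, $T\ge 1$, and let $(x_1,\mathbf{y}_1),\dots,(x_N,\mathbf{y}_N)\in\mathbb{R}\times\mathbb{R}^T$ be training data with $x_1<x_2<\dots<x_N$. Fix a width $K\ge N^2$. Consider the problem $$\min_{\theta}\ \sum_{k=1}^K\|\mathbf{v}_k\|_2\quad\text{subject to}\quad |w_k|=1\ (k=1,\dots,K),\qquad f_\theta(x_i)=\mathbf{y}_i\ (i=1,\dots,N),\tag{P}$$ where $f_\theta(x)=\sum_{k=1}^K \mathbf{v}_k(w_kx+b_k)_+ + \mathbf{a}x+\mathbf{c}$ with $w_k,b_k\in\mathbb{R}$, $\mathbf{v}_k,\mathbf{a},\mathbf{c}\in\mathbb{R}^T$, and $\theta=(\{\mathbf{v}_k,w_k,b_k\}_{k=1}^K,\mathbf{a},\mathbf{c})$. A function $f:\mathbb{R}\to\mathbb{R}^T$ is called a solution of (P) if $f=f_\theta$ for some optimal $\theta$ of (P). Then the connect-the-dots interpolant $f_{\mathcal{D}}$ is always a solution of (P). Moreover, the solution of (P) is non-unique (i.e., there exist optimal $\theta,\theta'$ with $f_\theta\neq f_{\theta'}$) if and only if for some $i\in\{2,\dots,N-2\}$ the two vectors $$\mathbf{s}_i-\mathbf{s}_{i-1}=\frac{\mathbf{y}_{i+1}-\mathbf{y}_i}{x_{i+1}-x_i}-\frac{\mathbf{y}_i-\mathbf{y}_{i-1}}{x_i-x_{i-1}},\qquad \mathbf{s}_{i+1}-\mathbf{s}_i=\frac{\mathbf{y}_{i+2}-\mathbf{y}_{i+1}}{x_{i+2}-x_{i+1}}-\frac{\mathbf{y}_{i+1}-\mathbf{y}_i}{x_{i+1}-x_i}$$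 are both nonzero and aligned. If this condition is not satisfied, then $f_{\mathcal{D}}$ is the unique solution of (P). Furthermore, if $T>1$ and $N>1$, the set of all data $(x_1,\dots,x_N,\mathbf{y}_1,\dots,\mathbf{y}_N)$ (with $x_1<\dots<x_N$) for which (P) has non-unique solutions has Lebesgue measure zero as a subset of $\mathbb{R}^N\times\mathbb{R}^{T\times N}$.
   Context: $(z)_+=\max\{0,z\}$. For $i=1,\dots,N-1$, $\mathbf{s}_i=\frac{\mathbf{y}_{i+1}-\mathbf{y}_i}{x_{i+1}-x_i}\in\mathbb{R}^T$. The connect-the-dots interpolant $f_{\mathcal{D}}=(f_{\mathcal{D}_1},\dots,f_{\mathcal{D}_T}):\mathbb{R}\to\mathbb{R}^T$ is the continuous piecewise linear function which, in each coordinate $t$, interpolates the points $(x_i,y_{it})$ and is linear on each $[x_i,x_{i+1}]$, is linear with slope $\mathbf{s}_1$ on $(-\infty,x_2]$ and linear with slope $\mathbf{s}_{N-1}$ on $[x_{N-1},\infty)$. Two vectors $\mathbf{u}_1,\mathbf{u}_2$ are aligned if $\mathbf{u}_1^\top\mathbf{u}_2=\|\mathbf{u}_1\|_2\|\mathbf{u}_2\|_2$. *)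

theory Defs
  imports "HOL-Analysis.Analysis"
begin

text \<open>Vectors in R^T are modelled as real ^ 't with CARD('t) = T.
  Data points are indexed by 1..N, neurons by 1..K.\<close>

definition relu :: "real \<Rightarrow> real" where
  "relu z = max 0 z"

text \<open>Parameters theta = (v, w, b, a, c); only indices 1..K of v, w, b are used.\<close>
type_synonym 't param =
  "(nat \<Rightarrow> real ^ 't) \<times> (nat \<Rightarrow> real) \<times> (nat \<Rightarrow> real) \<times> (real ^ 't) \<times> (real ^ 't)"

definition fnet :: "nat \<Rightarrow> ('t::finite) param \<Rightarrow> real \<Rightarrow> real ^ 't" where
  "fnet K \<theta> t = (case \<theta> of (v, w, b, a, c) \<Rightarrow>
      (\<Sum>k = 1..K. relu (w k * t + b k) *\<^sub>R v k) + t *\<^sub>R a + c)"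

definition cost :: "nat \<Rightarrow> ('t::finite) param \<Rightarrow> real" where
  "cost K \<theta> = (case \<theta> of (v, w, b, a, c) \<Rightarrow> (\<Sum>k = 1..K. norm (v k)))"

definition feasible :: "nat \<Rightarrow> nat \<Rightarrow> (nat \<Rightarrow> real) \<Rightarrow> (nat \<Rightarrow> real ^ 't) \<Rightarrow> ('t::finite) param \<Rightarrow> bool" where
  "feasible K N x y \<theta> \<longleftrightarrow>
     (case \<theta> of (v, w, b, a, c) \<Rightarrow> (\<forall>k \<in> {1..K}. \<bar>w k\<bar> = 1)) \<and>
     (\<forall>i \<in> {1..N}. fnet K \<theta> (x i) = y i)"

definition optimal :: "nat \<Rightarrow> nat \<Rightarrow> (nat \<Rightarrow> real) \<Rightarrow> (nat \<Rightarrow> real ^ 't) \<Rightarrow> ('t::finite) param \<Rightarrow> bool" where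
  "optimal K N x y \<theta> \<longleftrightarrow> feasible K N x y \<theta> \<and>
     (\<forall>\<theta>'. feasible K N x y \<theta>' \<longrightarrow> cost K \<theta> \<le> cost K \<theta>')"

definition is_solution :: "nat \<Rightarrow> nat \<Rightarrow> (nat \<Rightarrow> real) \<Rightarrow> (nat \<Rightarrow> real ^ 't) \<Rightarrow> (real \<Rightarrow> real ^ 't::finite) \<Rightarrow> bool" where
  "is_solution K N x y f \<longleftrightarrow> (\<exists>\<theta>. optimal K N x y \<theta> \<and> f = fnet K \<theta>)"

definition nonunique :: "nat \<Rightarrow> nat \<Rightarrow> (nat \<Rightarrow> real) \<Rightarrow> (nat \<Rightarrow> real ^ 't::finite) \<Rightarrow> bool" where
  "nonunique K N x y \<longleftrightarrow>
     (\<exists>\<theta> \<theta>'. optimal K N x y \<theta> \<and> optimal K N x y \<theta>' \<and> fnet K \<theta> \<noteq> fnet K \<theta>')"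

definition slope :: "(nat \<Rightarrow> real) \<Rightarrow> (nat \<Rightarrow> real ^ 't::finite) \<Rightarrow> nat \<Rightarrow> real ^ 't" where
  "slope x y i = (1 / (x (Suc i) - x i)) *\<^sub>R (y (Suc i) - y i)"

text \<open>Connect-the-dots interpolant (for N >= 2): on [x_i, x_{i+1}] it is the linear
  interpolant, on (-inf, x_2] it has slope s_1, on [x_{N-1}, inf) slope s_{N-1}.\<close>
definition connect_dots :: "nat \<Rightarrow> (nat \<Rightarrow> real) \<Rightarrow> (nat \<Rightarrow> real ^ 't::finite) \<Rightarrow> real \<Rightarrow> real ^ 't" where
  "connect_dots N x y t =
     (let i = (if t \<le> x 1 then 1 else Max {j \<in> {1..N-1}. x j \<le> t})
      in y i + (t - x i) *\<^sub>R slope x y i)"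

definition aligned :: "real ^ 't::finite \<Rightarrow> real ^ 't \<Rightarrow> bool" where
  "aligned u1 u2 \<longleftrightarrow> inner u1 u2 = norm u1 * norm u2"

definition alignment_condition :: "nat \<Rightarrow> (nat \<Rightarrow> real) \<Rightarrow> (nat \<Rightarrow> real ^ 't::finite) \<Rightarrow> bool" where
  "alignment_condition N x y \<longleftrightarrow>
     (\<exists>i \<in> {2..N-2}.
        slope x y i - slope x y (i - 1) \<noteq> 0 \<and>
        slope x y (Suc i) - slope x y i \<noteq> 0 \<and>
        aligned (slope x y i - slope x y (i - 1)) (slope x y (Suc i) - slope x y i))"

definition strictly_sorted :: "nat \<Rightarrow> (nat \<Rightarrow> real) \<Rightarrow> bool" where
  "strictly_sorted N x \<longleftrightarrow> (\<forall>i \<in> {1..N}. \<forall>j \<in> {1..N}. i < j \<longrightarrow> x i < x j)"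

definition data_measure :: "nat \<Rightarrow> ((nat \<Rightarrow> real) \<times> (nat \<Rightarrow> real ^ 't::finite)) measure" where
  "data_measure N = (\<Pi>\<^sub>M i\<in>{1..N}. lborel) \<Otimes>\<^sub>M (\<Pi>\<^sub>M i\<in>{1..N}. lborel)"

end

theory Submission
  imports Defs
begin

(*
  For a unit weight w the neuron relu (w t + b) has its knot at p = - w b, and its average slope
  over [x_i, x_(i+1)] is, up to a constant, the fraction of that interval lying to the right of p.
  Hence the jump s_i - s_(i-1) of the data slopes at an interior point x_i equals
  sum_k h_k(i) v_k with kink weights h_k(i) >= 0 whose total over i is at most 1 for every neuron,
  and the triangle inequality gives cost >= sum_i |s_i - s_(i-1)|.  The connect-the-dots network,
  with one neuron relu (t - x_i) per interior data point, attains this bound.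

  In an optimal network every active neuron therefore has total kink weight 1, which puts its knot
  in [x_2, x_(N-1)], and equality in the triangle inequality aligns v_k with every slope jump it
  contributes to.  A knot strictly inside (x_i, x_(i+1)) contributes to the jumps at both x_i and
  x_(i+1).  So unless two consecutive nonzero jumps are aligned, all knots sit at data points, every
  optimal network is affine between consecutive data points, and it equals f_D.  Conversely, two
  aligned nonzero jumps can be merged into a single kink inside (x_i, x_(i+1)) at the same cost.

  For T > 1, with all data except y_(i+2) fixed, alignment of the jumps at x_i and x_(i+1)
  confines y_(i+2) to a hyperplane; by Fubini the data with non-unique solutions form a null set.
*)

lemma strictly_sorted_less:
  "strictly_sorted N x \<Longrightarrow> 1 \<le> i \<Longrightarrow> i < j \<Longrightarrow> j \<le> N \<Longrightarrow> x i < x j"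
  unfolding strictly_sorted_def by auto

lemma strictly_sorted_le:
  "strictly_sorted N x \<Longrightarrow> 1 \<le> i \<Longrightarrow> i \<le> j \<Longrightarrow> j \<le> N \<Longrightarrow> x i \<le> x j"
  using strictly_sorted_less[of N x i j] by (cases "i = j") auto

lemma feasible_unit_weight:
  "feasible K N x y (v, w, b, a, c) \<Longrightarrow> k \<in> {1..K} \<Longrightarrow> \<bar>w k\<bar> = 1"
  unfolding feasible_def by auto

section \<open>Slopes of unit neurons\<close>

lemma relu_neg: "relu (- t) = relu t - t"
  unfolding relu_def by auto

definition hinge_slope :: "real \<Rightarrow> real \<Rightarrow> real \<Rightarrow> real" where
  "hinge_slope u v p = (relu (v - p) - relu (u - p)) / (v - u)"

lemma hinge_slope_eq:
  "u < v \<Longrightarrow> hinge_slope u v p = (if p \<le> u then 1 else if v \<le> p then 0 else (v - p) / (v - u))"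
  unfolding hinge_slope_def relu_def by (auto simp: max_def field_simps)

lemma hinge_slope_nonneg: "u < v \<Longrightarrow> 0 \<le> hinge_slope u v p"
  by (simp add: hinge_slope_eq)

lemma hinge_slope_le_one: "u < v \<Longrightarrow> hinge_slope u v p \<le> 1"
  by (simp add: hinge_slope_eq)

lemma hinge_slope_mono: "u < v \<Longrightarrow> v < w \<Longrightarrow> hinge_slope u v p \<le> hinge_slope v w p"
  using hinge_slope_nonneg[of u v p] hinge_slope_le_one[of v w p] by (auto simp: hinge_slope_eq)

lemma hinge_slope_strict: "u < p \<Longrightarrow> p < v \<Longrightarrow> 0 < hinge_slope u v p \<and> hinge_slope u v p < 1"
  by (simp add: hinge_slope_eq)

lemma hinge_slope_eq_one_iff: "u < v \<Longrightarrow> hinge_slope u v p = 1 \<longleftrightarrow> p \<le> u"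
  by (auto simp: hinge_slope_eq)

lemma hinge_slope_eq_zero_iff: "u < v \<Longrightarrow> hinge_slope u v p = 0 \<longleftrightarrow> v \<le> p"
  by (auto simp: hinge_slope_eq)

definition neuron_slope :: "(nat \<Rightarrow> real) \<Rightarrow> real \<Rightarrow> real \<Rightarrow> nat \<Rightarrow> real" where
  "neuron_slope x w b i = (relu (w * x (Suc i) + b) - relu (w * x i + b)) / (x (Suc i) - x i)"

definition neuron_kink :: "(nat \<Rightarrow> real) \<Rightarrow> real \<Rightarrow> real \<Rightarrow> nat \<Rightarrow> real" where
  "neuron_kink x w b i = neuron_slope x w b i - neuron_slope x w b (i - 1)"

lemma neuron_slope_unit:
  assumes "\<bar>w\<bar> = 1" "x i \<noteq> x (Suc i)"
  shows "neuron_slope x w b i = hinge_slope (x i) (x (Suc i)) (- w * b) - (if w = -1 then 1 else 0)"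
proof (cases "w = 1")
  case True
  then show ?thesis unfolding neuron_slope_def hinge_slope_def by (simp add: add.commute)
next
  case False
  then have w: "w = -1" using assms by auto
  have flip: "\<And>t. relu (b - t) = relu (t - b) - (t - b)"
    using relu_neg by (metis minus_diff_eq)
  show ?thesis unfolding neuron_slope_def hinge_slope_def w using assms(2)
    by (simp add: flip field_simps)
qed

lemma neuron_kink_unit:
  assumes "\<bar>w\<bar> = 1" "1 \<le> i" "x (i - 1) \<noteq> x i" "x i \<noteq> x (Suc i)"
  shows "neuron_kink x w b i
    = hinge_slope (x i) (x (Suc i)) (- w * b) - hinge_slope (x (i - 1)) (x i) (- w * b)"
  using neuron_slope_unit[OF assms(1) assms(4)] neuron_slope_unit[OF assms(1), of x "i - 1"] assms
  unfolding neuron_kink_def by simp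

lemma neuron_kink_nonneg:
  assumes "\<bar>w\<bar> = 1" "strictly_sorted N x" "2 \<le> i" "i \<le> N - 1"
  shows "0 \<le> neuron_kink x w b i"
proof -
  have "x (i - 1) < x i" "x i < x (Suc i)"
    using strictly_sorted_less[OF assms(2)] assms(3,4) by auto
  then show ?thesis
    using neuron_kink_unit[OF assms(1)] hinge_slope_mono assms(3) by fastforce
qed

lemma neuron_kink_pos:
  assumes "\<bar>w\<bar> = 1" "strictly_sorted N x" "2 \<le> i" "Suc (Suc i) \<le> N"
    and "x i < - w * b" "- w * b < x (Suc i)"
  shows "0 < neuron_kink x w b i" "0 < neuron_kink x w b (Suc i)"
proof -
  have x: "x (i - 1) < x i" "x i < x (Suc i)" "x (Suc i) < x (Suc (Suc i))"
    using strictly_sorted_less[OF assms(2)] assms(3,4) by auto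
  have "hinge_slope (x (i - 1)) (x i) (- w * b) = 0"
    "hinge_slope (x (Suc i)) (x (Suc (Suc i))) (- w * b) = 1"
    using hinge_slope_eq_zero_iff[OF x(1)] hinge_slope_eq_one_iff[OF x(3)] assms(5,6) by auto
  then show "0 < neuron_kink x w b i" "0 < neuron_kink x w b (Suc i)"
    using neuron_kink_unit[OF assms(1), of _ x] hinge_slope_strict[OF assms(5,6)] x assms(3) by auto
qed

lemma sum_neuron_kink:
  assumes "\<bar>w\<bar> = 1" "strictly_sorted N x" "N \<ge> 2"
  shows "(\<Sum>i = 2..N - 1. neuron_kink x w b i)
    = hinge_slope (x (N - 1)) (x N) (- w * b) - hinge_slope (x 1) (x 2) (- w * b)"
proof -
  have x: "x (N - 1) < x (Suc (N - 1))" "x 1 < x (Suc 1)"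
    using strictly_sorted_less[OF assms(2), of "N - 1" N] strictly_sorted_less[OF assms(2), of 1 "Suc 1"]
      assms(3) by auto
  have "(\<Sum>i = 2..N - 1. neuron_kink x w b i)
      = (\<Sum>i = Suc 1..N - 1. neuron_slope x w b i - neuron_slope x w b (i - 1))"
    unfolding neuron_kink_def by (simp add: numeral_2_eq_2)
  also have "\<dots> = neuron_slope x w b (N - 1) - neuron_slope x w b 1"
    by (rule sum_telescope'') (use assms(3) in auto)
  also have "\<dots> = hinge_slope (x (N - 1)) (x N) (- w * b) - hinge_slope (x 1) (x 2) (- w * b)"
    using neuron_slope_unit[OF assms(1) less_imp_neq[OF x(1)]]
      neuron_slope_unit[OF assms(1) less_imp_neq[OF x(2)]]
      assms(3) by (simp add: numeral_2_eq_2)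
  finally show ?thesis .
qed

lemma sum_neuron_kink_le_one:
  assumes "\<bar>w\<bar> = 1" "strictly_sorted N x" "N \<ge> 2"
  shows "(\<Sum>i = 2..N - 1. neuron_kink x w b i) \<le> 1"
proof -
  have "x (N - 1) < x N" "x 1 < x 2"
    using strictly_sorted_less[OF assms(2)] assms(3) by auto
  then show ?thesis
    unfolding sum_neuron_kink[OF assms]
    using hinge_slope_le_one[of "x (N - 1)" "x N" "- w * b"] hinge_slope_nonneg[of "x 1" "x 2" "- w * b"]
    by linarith
qed

section \<open>The lower bound on the cost\<close>

definition slope_jump :: "(nat \<Rightarrow> real) \<Rightarrow> (nat \<Rightarrow> real ^ 't::finite) \<Rightarrow> nat \<Rightarrow> real ^ 't" where
  "slope_jump x y i = slope x y i - slope x y (i - 1)"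

definition total_jump :: "nat \<Rightarrow> (nat \<Rightarrow> real) \<Rightarrow> (nat \<Rightarrow> real ^ 't::finite) \<Rightarrow> real" where
  "total_jump N x y = (\<Sum>i = 2..N - 1. norm (slope_jump x y i))"

lemma slope_eq_neuron_slopes:
  assumes "feasible K N x y (v, w, b, a, c)" "1 \<le> i" "Suc i \<le> N" "x i \<noteq> x (Suc i)"
  shows "slope x y i = (\<Sum>k = 1..K. neuron_slope x (w k) (b k) i *\<^sub>R v k) + a"
proof -
  have "y i = fnet K (v, w, b, a, c) (x i)" "y (Suc i) = fnet K (v, w, b, a, c) (x (Suc i))"
    using assms unfolding feasible_def by auto
  then have "y (Suc i) - y i
      = (\<Sum>k = 1..K. (relu (w k * x (Suc i) + b k) - relu (w k * x i + b k)) *\<^sub>R v k)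
        + (x (Suc i) - x i) *\<^sub>R a"
    unfolding fnet_def by (simp add: algebra_simps sum_subtractf scaleR_left_diff_distrib)
  then show ?thesis
    unfolding slope_def neuron_slope_def using assms(4)
    by (simp add: scaleR_sum_right scaleR_add_right divide_inverse_commute)
qed

lemma slope_jump_eq_kinks:
  assumes "feasible K N x y (v, w, b, a, c)" "strictly_sorted N x" "2 \<le> i" "i \<le> N - 1"
  shows "slope_jump x y i = (\<Sum>k = 1..K. neuron_kink x (w k) (b k) i *\<^sub>R v k)"
proof -
  have x: "x (i - 1) < x (Suc (i - 1))" "x i < x (Suc i)"
    using strictly_sorted_less[OF assms(2)] assms(3,4) by auto
  have "slope x y i = (\<Sum>k = 1..K. neuron_slope x (w k) (b k) i *\<^sub>R v k) + a"
    by (rule slope_eq_neuron_slopes[OF assms(1)]) (use x assms(3,4) in auto)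
  moreover have "slope x y (i - 1) = (\<Sum>k = 1..K. neuron_slope x (w k) (b k) (i - 1) *\<^sub>R v k) + a"
    by (rule slope_eq_neuron_slopes[OF assms(1)]) (use x assms(3,4) in auto)
  ultimately show ?thesis
    unfolding slope_jump_def neuron_kink_def by (simp add: scaleR_left_diff_distrib sum_subtractf)
qed

lemma norm_slope_jump_le:
  assumes "feasible K N x y (v, w, b, a, c)" "strictly_sorted N x" "2 \<le> i" "i \<le> N - 1"
  shows "norm (slope_jump x y i) \<le> (\<Sum>k = 1..K. neuron_kink x (w k) (b k) i * norm (v k))"
proof -
  have "norm (slope_jump x y i) \<le> (\<Sum>k = 1..K. norm (neuron_kink x (w k) (b k) i *\<^sub>R v k))"
    unfolding slope_jump_eq_kinks[OF assms] by (rule norm_sum)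
  also have "\<dots> = (\<Sum>k = 1..K. neuron_kink x (w k) (b k) i * norm (v k))"
    using neuron_kink_nonneg[OF feasible_unit_weight[OF assms(1)] assms(2-4)] by (intro sum.cong) auto
  finally show ?thesis .
qed

lemma cost_decomposition:
  "cost K (v, w, b, a, c) = total_jump N x y
     + (\<Sum>i = 2..N - 1. (\<Sum>k = 1..K. neuron_kink x (w k) (b k) i * norm (v k)) - norm (slope_jump x y i))
     + (\<Sum>k = 1..K. (1 - (\<Sum>i = 2..N - 1. neuron_kink x (w k) (b k) i)) * norm (v k))"
proof -
  have "(\<Sum>i = 2..N - 1. \<Sum>k = 1..K. neuron_kink x (w k) (b k) i * norm (v k))
      = (\<Sum>k = 1..K. (\<Sum>i = 2..N - 1. neuron_kink x (w k) (b k) i) * norm (v k))"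
    by (subst sum.swap) (simp add: sum_distrib_right)
  then show ?thesis
    unfolding cost_def total_jump_def by (simp add: sum_subtractf algebra_simps)
qed

lemma cost_decomposition_terms_nonneg:
  assumes "feasible K N x y (v, w, b, a, c)" "strictly_sorted N x" "N \<ge> 2"
  shows "\<And>i. i \<in> {2..N - 1} \<Longrightarrow>
      0 \<le> (\<Sum>k = 1..K. neuron_kink x (w k) (b k) i * norm (v k)) - norm (slope_jump x y i)"
    and "\<And>k. k \<in> {1..K} \<Longrightarrow> 0 \<le> (1 - (\<Sum>i = 2..N - 1. neuron_kink x (w k) (b k) i)) * norm (v k)"
  using norm_slope_jump_le[OF assms(1,2)]
    sum_neuron_kink_le_one[OF feasible_unit_weight[OF assms(1)] assms(2,3)] by auto

lemma total_jump_le_cost: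
  assumes "feasible K N x y \<theta>" "strictly_sorted N x" "N \<ge> 2"
  shows "total_jump N x y \<le> cost K \<theta>"
proof -
  obtain v w b a c where \<theta>: "\<theta> = (v, w, b, a, c)" by (cases \<theta>) auto
  note nonneg = cost_decomposition_terms_nonneg[OF assms(1)[unfolded \<theta>] assms(2,3)]
  show ?thesis
    unfolding \<theta> cost_decomposition[of K v w b a c N x y]
    by (intro add_increasing2 sum_nonneg nonneg order.refl)
qed

lemma tight_of_cost_le_total_jump:
  assumes "feasible K N x y (v, w, b, a, c)" "strictly_sorted N x" "N \<ge> 2"
    and "cost K (v, w, b, a, c) \<le> total_jump N x y"
  shows "\<And>i. i \<in> {2..N - 1} \<Longrightarrow>
      norm (slope_jump x y i) = (\<Sum>k = 1..K. neuron_kink x (w k) (b k) i * norm (v k))"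
    and "\<And>k. k \<in> {1..K} \<Longrightarrow> v k \<noteq> 0 \<Longrightarrow> (\<Sum>i = 2..N - 1. neuron_kink x (w k) (b k) i) = 1"
proof -
  let ?A = "\<lambda>i. (\<Sum>k = 1..K. neuron_kink x (w k) (b k) i * norm (v k)) - norm (slope_jump x y i)"
  let ?B = "\<lambda>k. (1 - (\<Sum>i = 2..N - 1. neuron_kink x (w k) (b k) i)) * norm (v k)"
  note nonneg = cost_decomposition_terms_nonneg[OF assms(1-3)]
  have "0 \<le> sum ?A {2..N - 1}" "0 \<le> sum ?B {1..K}"
    by (intro sum_nonneg nonneg; assumption)+
  then have "sum ?A {2..N - 1} = 0" "sum ?B {1..K} = 0"
    using assms(4) cost_decomposition[of K v w b a c N x y] by linarith+
  then have "\<forall>i \<in> {2..N - 1}. ?A i = 0" "\<forall>k \<in> {1..K}. ?B k = 0"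
    using sum_nonneg_eq_0_iff[of "{2..N - 1}" ?A] sum_nonneg_eq_0_iff[of "{1..K}" ?B] nonneg
    by simp_all
  then show "\<And>i. i \<in> {2..N - 1} \<Longrightarrow>
      norm (slope_jump x y i) = (\<Sum>k = 1..K. neuron_kink x (w k) (b k) i * norm (v k))"
    and "\<And>k. k \<in> {1..K} \<Longrightarrow> v k \<noteq> 0 \<Longrightarrow> (\<Sum>i = 2..N - 1. neuron_kink x (w k) (b k) i) = 1"
    by auto
qed

section \<open>The connect-the-dots network\<close>

definition hinge_interpolant :: "nat \<Rightarrow> (nat \<Rightarrow> real) \<Rightarrow> (nat \<Rightarrow> real ^ 't::finite) \<Rightarrow> real \<Rightarrow> real ^ 't" where
  "hinge_interpolant N x y t =
     y 1 + (t - x 1) *\<^sub>R slope x y 1 + (\<Sum>j = 2..N - 1. relu (t - x j) *\<^sub>R slope_jump x y j)"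

text \<open>Piece \<open>i\<close> is \<open>(-\<infinity>, x 2]\<close> for \<open>i = 1\<close>, \<open>[x i, x (i + 1)]\<close> for \<open>1 < i < N - 1\<close>
  and \<open>[x (N - 1), \<infinity>)\<close> for \<open>i = N - 1\<close> (the whole line if \<open>N = 2\<close>); \<open>connect_dots\<close> is
  affine on each piece.\<close>

definition data_piece :: "nat \<Rightarrow> (nat \<Rightarrow> real) \<Rightarrow> nat \<Rightarrow> real set" where
  "data_piece N x i = {t. (1 < i \<longrightarrow> x i \<le> t) \<and> (i < N - 1 \<longrightarrow> t \<le> x (Suc i))}"

lemma data_piece_endpoints:
  assumes "strictly_sorted N x" "i \<in> {1..N - 1}"
  shows "x i \<in> data_piece N x i" "x (Suc i) \<in> data_piece N x i"
  using strictly_sorted_le[OF assms(1), of i "Suc i"] assms(2) unfolding data_piece_def by auto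

lemma data_piece_index:
  fixes t :: real
  assumes "strictly_sorted N x" "N \<ge> 2"
  defines "i \<equiv> if t \<le> x 1 then 1 else Max {j \<in> {1..N - 1}. x j \<le> t}"
  shows "i \<in> {1..N - 1}" "t \<in> data_piece N x i"
proof -
  have "i \<in> {1..N - 1} \<and> t \<in> data_piece N x i"
  proof (cases "t \<le> x 1")
    case True
    then show ?thesis
      using strictly_sorted_less[OF assms(1), of 1 2] assms(2) unfolding i_def data_piece_def
      by (auto simp: numeral_2_eq_2)
  next
    case False
    define S where "S = {j \<in> {1..N - 1}. x j \<le> t}"
    have "finite S" "1 \<in> S" unfolding S_def using False assms(2) by auto
    then have "Max S \<in> S" "\<And>j. j \<in> S \<Longrightarrow> j \<le> Max S" using Max_in by auto
    then have i: "i \<in> S" "\<And>j. j \<in> S \<Longrightarrow> j \<le> i"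
      unfolding i_def S_def[symmetric] using False by auto
    have "t \<le> x (Suc i)" if "i < N - 1"
      using i(2)[of "Suc i"] that unfolding S_def by fastforce
    then show ?thesis using i(1) unfolding S_def data_piece_def by auto
  qed
  then show "i \<in> {1..N - 1}" "t \<in> data_piece N x i" by auto
qed

lemma slope_telescope:
  assumes "strictly_sorted N x" "1 \<le> i" "i \<le> N - 1"
  shows "y 1 + (t - x 1) *\<^sub>R slope x y 1 + (\<Sum>j = 2..i. (t - x j) *\<^sub>R slope_jump x y j)
    = y i + (t - x i) *\<^sub>R slope x y i"
  using assms(2,3)
proof (induction i rule: dec_induct)
  case base
  then show ?case by simp
next
  case (step n)
  have "x n < x (Suc n)" by (rule strictly_sorted_less[OF assms(1)]) (use step in auto)
  then have y: "y (Suc n) = y n + (x (Suc n) - x n) *\<^sub>R slope x y n"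
    unfolding slope_def by simp
  have "y 1 + (t - x 1) *\<^sub>R slope x y 1 + (\<Sum>j = 2..Suc n. (t - x j) *\<^sub>R slope_jump x y j)
      = (y 1 + (t - x 1) *\<^sub>R slope x y 1 + (\<Sum>j = 2..n. (t - x j) *\<^sub>R slope_jump x y j))
        + (t - x (Suc n)) *\<^sub>R slope_jump x y (Suc n)"
    using step(1) by (simp add: sum.cl_ivl_Suc)
  also have "\<dots> = y n + (t - x n) *\<^sub>R slope x y n + (t - x (Suc n)) *\<^sub>R (slope x y (Suc n) - slope x y n)"
    using step unfolding slope_jump_def by simp
  also have "\<dots> = y (Suc n) + (t - x (Suc n)) *\<^sub>R slope x y (Suc n)"
    unfolding y by (simp add: algebra_simps)
  finally show ?case .
qed

lemma hinge_interpolant_on_piece: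
  assumes "strictly_sorted N x" "i \<in> {1..N - 1}" "t \<in> data_piece N x i"
  shows "hinge_interpolant N x y t = y i + (t - x i) *\<^sub>R slope x y i"
proof -
  have "{2..N - 1} = {2..i} \<union> {Suc i..N - 1}" using assms(2) by auto
  then have "(\<Sum>j = 2..N - 1. relu (t - x j) *\<^sub>R slope_jump x y j)
      = (\<Sum>j = 2..i. relu (t - x j) *\<^sub>R slope_jump x y j)
        + (\<Sum>j = Suc i..N - 1. relu (t - x j) *\<^sub>R slope_jump x y j)"
    by (simp add: sum.union_disjoint)
  also have "(\<Sum>j = 2..i. relu (t - x j) *\<^sub>R slope_jump x y j)
      = (\<Sum>j = 2..i. (t - x j) *\<^sub>R slope_jump x y j)"
  proof (rule sum.cong)
    fix j assume j: "j \<in> {2..i}"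
    then have "x j \<le> x i" using strictly_sorted_le[OF assms(1), of j i] assms(2) by auto
    moreover have "x i \<le> t" using j assms(3) unfolding data_piece_def by auto
    ultimately have "x j \<le> t" by linarith
    then show "relu (t - x j) *\<^sub>R slope_jump x y j = (t - x j) *\<^sub>R slope_jump x y j"
      unfolding relu_def by simp
  qed simp
  also have "(\<Sum>j = Suc i..N - 1. relu (t - x j) *\<^sub>R slope_jump x y j) = 0"
  proof (rule sum.neutral, clarify)
    fix j assume j: "j \<in> {Suc i..N - 1}"
    then have "x (Suc i) \<le> x j" using strictly_sorted_le[OF assms(1), of "Suc i" j] by auto
    moreover have "t \<le> x (Suc i)" using j assms(3) unfolding data_piece_def by auto
    ultimately have "t \<le> x j" by linarith
    then show "relu (t - x j) *\<^sub>R slope_jump x y j = 0" unfolding relu_def by simp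
  qed
  finally have "(\<Sum>j = 2..N - 1. relu (t - x j) *\<^sub>R slope_jump x y j)
      = (\<Sum>j = 2..i. (t - x j) *\<^sub>R slope_jump x y j)" by simp
  with slope_telescope[OF assms(1), of i y t] assms(2) show ?thesis
    unfolding hinge_interpolant_def by simp
qed

lemma hinge_interpolant_at_data:
  assumes "strictly_sorted N x" "N \<ge> 2" "j \<in> {1..N}"
  shows "hinge_interpolant N x y (x j) = y j"
proof (cases "j = N")
  case True
  have last: "N - 1 \<in> {1..N - 1}" "Suc (N - 1) = N" using assms(2) by auto
  have "x (N - 1) < x N" by (rule strictly_sorted_less[OF assms(1)]) (use assms(2) in auto)
  moreover have "hinge_interpolant N x y (x N) = y (N - 1) + (x N - x (N - 1)) *\<^sub>R slope x y (N - 1)"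
    using hinge_interpolant_on_piece[OF assms(1) last(1) data_piece_endpoints(2)[OF assms(1) last(1)]]
    unfolding last(2) .
  ultimately show ?thesis
    unfolding slope_def True last(2) by simp
next
  case False
  then have "j \<in> {1..N - 1}" using assms(3) by auto
  then show ?thesis
    using hinge_interpolant_on_piece[OF assms(1) _ data_piece_endpoints(1)[OF assms(1)]] by simp
qed

lemma connect_dots_eq_hinge_interpolant:
  assumes "strictly_sorted N x" "N \<ge> 2"
  shows "connect_dots N x y = hinge_interpolant N x y"
proof
  fix t
  show "connect_dots N x y t = hinge_interpolant N x y t"
    unfolding connect_dots_def Let_def
    by (rule hinge_interpolant_on_piece[OF assms(1) data_piece_index[OF assms], symmetric])
qed

definition connect_dots_net :: "nat \<Rightarrow> (nat \<Rightarrow> real) \<Rightarrow> (nat \<Rightarrow> real ^ 't::finite) \<Rightarrow> 't param" where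
  "connect_dots_net N x y =
     (\<lambda>k. if k \<in> {2..N - 1} then slope_jump x y k else 0, \<lambda>k. 1,
      \<lambda>k. if k \<in> {2..N - 1} then - x k else 0, slope x y 1, y 1 - x 1 *\<^sub>R slope x y 1)"

lemma fnet_connect_dots_net:
  assumes "K \<ge> N - 1"
  shows "fnet K (connect_dots_net N x y) = hinge_interpolant N x y"
proof
  fix t
  have "(\<Sum>k = 1..K. relu (1 * t + (if k \<in> {2..N - 1} then - x k else 0)) *\<^sub>R
           (if k \<in> {2..N - 1} then slope_jump x y k else 0))
      = (\<Sum>k = 2..N - 1. relu (t - x k) *\<^sub>R slope_jump x y k)"
    using assms by (intro sum.mono_neutral_cong_right) auto
  then show "fnet K (connect_dots_net N x y) t = hinge_interpolant N x y t"
    unfolding fnet_def connect_dots_net_def hinge_interpolant_def prod.case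
    by (simp add: algebra_simps)
qed

lemma cost_connect_dots_net:
  assumes "K \<ge> N - 1"
  shows "cost K (connect_dots_net N x y) = total_jump N x y"
proof -
  have "(\<Sum>k = 1..K. norm (if k \<in> {2..N - 1} then slope_jump x y k else 0))
      = (\<Sum>k = 2..N - 1. norm (slope_jump x y k))"
    using assms by (intro sum.mono_neutral_cong_right) auto
  then show ?thesis unfolding cost_def connect_dots_net_def total_jump_def prod.case .
qed

lemma feasible_connect_dots_net:
  assumes "strictly_sorted N x" "N \<ge> 2" "K \<ge> N - 1"
  shows "feasible K N x y (connect_dots_net N x y)"
  unfolding feasible_def fnet_connect_dots_net[OF assms(3)]
  by (auto simp: connect_dots_net_def hinge_interpolant_at_data[OF assms(1,2)]
      simp del: atLeastAtMost_iff)

lemma optimal_if_cost_eq_total_jump: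
  assumes "feasible K N x y \<theta>" "strictly_sorted N x" "N \<ge> 2" "cost K \<theta> = total_jump N x y"
  shows "optimal K N x y \<theta>"
  unfolding optimal_def using assms total_jump_le_cost[OF _ assms(2,3)] by metis

lemma optimal_connect_dots_net:
  assumes "strictly_sorted N x" "N \<ge> 2" "K \<ge> N - 1"
  shows "optimal K N x y (connect_dots_net N x y)"
  using optimal_if_cost_eq_total_jump[OF feasible_connect_dots_net[OF assms] assms(1,2)]
    cost_connect_dots_net[OF assms(3)] by blast

lemma optimal_feasible: "optimal K N x y \<theta> \<Longrightarrow> feasible K N x y \<theta>"
  unfolding optimal_def by simp

lemma optimal_cost_eq_total_jump:
  assumes "optimal K N x y \<theta>" "strictly_sorted N x" "N \<ge> 2" "K \<ge> N - 1"
  shows "cost K \<theta> = total_jump N x y"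
  using assms feasible_connect_dots_net[OF assms(2-4)] cost_connect_dots_net[OF assms(4)]
    total_jump_le_cost[OF _ assms(2,3)] unfolding optimal_def by (metis order.antisym)

lemma is_solution_connect_dots:
  assumes "strictly_sorted N x" "N \<ge> 2" "K \<ge> N - 1"
  shows "is_solution K N x y (connect_dots N x y)"
  unfolding is_solution_def connect_dots_eq_hinge_interpolant[OF assms(1,2)]
  using optimal_connect_dots_net[OF assms] fnet_connect_dots_net[OF assms(3)] by metis

section \<open>Uniqueness\<close>

lemma aligned_of_norm_sum_eq:
  fixes v :: "'i \<Rightarrow> 'a::real_inner"
  assumes "finite S" "\<And>k. k \<in> S \<Longrightarrow> 0 \<le> \<alpha> k"
    and eq: "norm (\<Sum>k\<in>S. \<alpha> k *\<^sub>R v k) = (\<Sum>k\<in>S. \<alpha> k * norm (v k))"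
    and "k0 \<in> S" "0 < \<alpha> k0" "v k0 \<noteq> 0"
  shows "(\<Sum>k\<in>S. \<alpha> k *\<^sub>R v k) \<noteq> 0"
    and "(\<Sum>k\<in>S. \<alpha> k *\<^sub>R v k) \<bullet> v k0 = norm (\<Sum>k\<in>S. \<alpha> k *\<^sub>R v k) * norm (v k0)"
proof -
  define d where "d = (\<Sum>k\<in>S. \<alpha> k *\<^sub>R v k)"
  have nonneg: "\<And>k. k \<in> S \<Longrightarrow> 0 \<le> \<alpha> k * norm (v k)" using assms(2) by simp
  have "0 < \<alpha> k0 * norm (v k0)" using assms(5,6) by simp
  also have "\<dots> \<le> (\<Sum>k\<in>S. \<alpha> k * norm (v k))"
    by (rule member_le_sum[OF assms(4)]) (use nonneg assms(1) in auto)
  finally show "(\<Sum>k\<in>S. \<alpha> k *\<^sub>R v k) \<noteq> 0" using eq by auto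
  have "d \<bullet> d = (\<Sum>k\<in>S. \<alpha> k * (d \<bullet> v k))"
    by (subst (2) d_def) (simp add: inner_sum_right)
  then have "(\<Sum>k\<in>S. \<alpha> k * (norm d * norm (v k) - d \<bullet> v k))
      = norm d * (\<Sum>k\<in>S. \<alpha> k * norm (v k)) - d \<bullet> d"
    by (simp add: right_diff_distrib sum_subtractf sum_distrib_left mult.left_commute)
  also have "\<dots> = 0"
    unfolding eq[folded d_def, symmetric] by (simp add: power2_norm_eq_inner[symmetric] power2_eq_square)
  finally have "(\<Sum>k\<in>S. \<alpha> k * (norm d * norm (v k) - d \<bullet> v k)) = 0" .
  moreover have "\<And>k. k \<in> S \<Longrightarrow> 0 \<le> \<alpha> k * (norm d * norm (v k) - d \<bullet> v k)"
    using assms(2) norm_cauchy_schwarz[of d] by simp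
  ultimately have "\<forall>k\<in>S. \<alpha> k * (norm d * norm (v k) - d \<bullet> v k) = 0"
    by (subst (asm) sum_nonneg_eq_0_iff[OF assms(1)])
  then have "\<alpha> k0 * (norm d * norm (v k0) - d \<bullet> v k0) = 0" using assms(4) by blast
  then have "d \<bullet> v k0 = norm d * norm (v k0)" using assms(5) by simp
  then show "(\<Sum>k\<in>S. \<alpha> k *\<^sub>R v k) \<bullet> v k0 = norm (\<Sum>k\<in>S. \<alpha> k *\<^sub>R v k) * norm (v k0)"
    unfolding d_def .
qed

lemma inner_eq_norm_mult_trans:
  fixes d1 d2 u :: "'a::real_inner"
  assumes "d1 \<bullet> u = norm d1 * norm u" "d2 \<bullet> u = norm d2 * norm u" "u \<noteq> 0"
  shows "d1 \<bullet> d2 = norm d1 * norm d2"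
proof -
  have u1: "norm d1 *\<^sub>R u = norm u *\<^sub>R d1" and u2: "norm d2 *\<^sub>R u = norm u *\<^sub>R d2"
    using assms(1,2) norm_cauchy_schwarz_eq by blast+
  have "norm u *\<^sub>R (norm d1 *\<^sub>R d2) = norm d1 *\<^sub>R (norm d2 *\<^sub>R u)"
    unfolding u2 by (simp add: mult.commute)
  also have "\<dots> = norm u *\<^sub>R (norm d2 *\<^sub>R d1)"
    unfolding scaleR_left_commute[of "norm d1"] u1 by (simp add: mult.commute)
  finally have "norm d1 *\<^sub>R d2 = norm d2 *\<^sub>R d1"
    using assms(3) by (metis scaleR_left_imp_eq norm_eq_zero)
  then show ?thesis using norm_cauchy_schwarz_eq by blast
qed

lemma optimal_tight:
  assumes "optimal K N x y (v, w, b, a, c)" "strictly_sorted N x" "N \<ge> 2" "K \<ge> N - 1"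
  shows "\<And>i. i \<in> {2..N - 1} \<Longrightarrow>
      norm (slope_jump x y i) = (\<Sum>k = 1..K. neuron_kink x (w k) (b k) i * norm (v k))"
    and "\<And>k. k \<in> {1..K} \<Longrightarrow> v k \<noteq> 0 \<Longrightarrow> (\<Sum>i = 2..N - 1. neuron_kink x (w k) (b k) i) = 1"
proof -
  have "cost K (v, w, b, a, c) \<le> total_jump N x y" using optimal_cost_eq_total_jump[OF assms] by simp
  note tight = tight_of_cost_le_total_jump[OF optimal_feasible[OF assms(1)] assms(2,3) this]
  show "\<And>i. i \<in> {2..N - 1} \<Longrightarrow>
      norm (slope_jump x y i) = (\<Sum>k = 1..K. neuron_kink x (w k) (b k) i * norm (v k))"
    by (rule tight(1))
  show "\<And>k. k \<in> {1..K} \<Longrightarrow> v k \<noteq> 0 \<Longrightarrow> (\<Sum>i = 2..N - 1. neuron_kink x (w k) (b k) i) = 1"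
    by (rule tight(2))
qed

lemma optimal_active_neuron_aligned:
  assumes opt: "optimal K N x y (v, w, b, a, c)" and "strictly_sorted N x" "N \<ge> 2" "K \<ge> N - 1"
    and "k \<in> {1..K}" "v k \<noteq> 0" "i \<in> {2..N - 1}" "0 < neuron_kink x (w k) (b k) i"
  shows "slope_jump x y i \<noteq> 0"
    and "slope_jump x y i \<bullet> v k = norm (slope_jump x y i) * norm (v k)"
proof -
  note f = optimal_feasible[OF opt]
  have i: "2 \<le> i" "i \<le> N - 1" using assms(7) by auto
  note jump = slope_jump_eq_kinks[OF f assms(2) i]
  have "\<And>k. k \<in> {1..K} \<Longrightarrow> 0 \<le> neuron_kink x (w k) (b k) i"
    using neuron_kink_nonneg[OF feasible_unit_weight[OF f] assms(2) i] .
  moreover have "norm (\<Sum>k = 1..K. neuron_kink x (w k) (b k) i *\<^sub>R v k)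
      = (\<Sum>k = 1..K. neuron_kink x (w k) (b k) i * norm (v k))"
    using optimal_tight(1)[OF opt assms(2-4,7)] unfolding jump .
  ultimately show "slope_jump x y i \<noteq> 0" "slope_jump x y i \<bullet> v k = norm (slope_jump x y i) * norm (v k)"
    unfolding jump
    using aligned_of_norm_sum_eq[of "{1..K}" "\<lambda>k. neuron_kink x (w k) (b k) i" v k] assms(5,6,8) by auto
qed

lemma optimal_active_knot_range:
  assumes opt: "optimal K N x y (v, w, b, a, c)" and "strictly_sorted N x" "N \<ge> 2" "K \<ge> N - 1"
    and "k \<in> {1..K}" "v k \<noteq> 0"
  shows "x 2 \<le> - w k * b k" "- w k * b k \<le> x (N - 1)"
proof -
  note f = optimal_feasible[OF opt]
  have x: "x (N - 1) < x N" "x 1 < x 2" using strictly_sorted_less[OF assms(2)] assms(3) by auto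
  have "hinge_slope (x (N - 1)) (x N) (- w k * b k) - hinge_slope (x 1) (x 2) (- w k * b k) = 1"
    using optimal_tight(2)[OF opt assms(2-4,5,6)]
      sum_neuron_kink[OF feasible_unit_weight[OF f assms(5)] assms(2,3)]
    by simp
  then have "hinge_slope (x (N - 1)) (x N) (- w k * b k) = 1" "hinge_slope (x 1) (x 2) (- w k * b k) = 0"
    using hinge_slope_le_one[OF x(1)] hinge_slope_nonneg[OF x(2)] by (smt (verit))+
  then show "x 2 \<le> - w k * b k" "- w k * b k \<le> x (N - 1)"
    using hinge_slope_eq_one_iff[OF x(1)] hinge_slope_eq_zero_iff[OF x(2)] by auto
qed

text \<open>A knot strictly between two data points feeds both adjacent slope jumps, which are
  then aligned with its outer weight and hence with each other.\<close>

lemma optimal_active_knot_not_inside: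
  assumes opt: "optimal K N x y (v, w, b, a, c)" and "strictly_sorted N x" "N \<ge> 2" "K \<ge> N - 1"
    and "\<not> alignment_condition N x y" "k \<in> {1..K}" "v k \<noteq> 0" "i \<in> {1..N - 2}"
  shows "\<not> (x i < - w k * b k \<and> - w k * b k < x (Suc i))"
proof
  assume "x i < - w k * b k \<and> - w k * b k < x (Suc i)"
  then have inside: "x i < - w k * b k" "- w k * b k < x (Suc i)" by auto
  note f = optimal_feasible[OF opt]
  have "i \<noteq> 1"
    using inside optimal_active_knot_range(1)[OF opt assms(2-4,6,7)] by (auto simp: numeral_2_eq_2)
  then have i: "2 \<le> i" "Suc (Suc i) \<le> N" using assms(8) by auto
  note kinks = neuron_kink_pos[OF feasible_unit_weight[OF f assms(6)] assms(2) i inside]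
  have "i \<in> {2..N - 1}" "Suc i \<in> {2..N - 1}" using i by auto
  note jumps = optimal_active_neuron_aligned[OF opt assms(2-4,6,7) this(1) kinks(1)]
    optimal_active_neuron_aligned[OF opt assms(2-4,6,7) this(2) kinks(2)]
  then have "aligned (slope_jump x y i) (slope_jump x y (Suc i))"
    unfolding aligned_def using inner_eq_norm_mult_trans assms(7) by blast
  then have "alignment_condition N x y"
    unfolding alignment_condition_def using jumps i by (auto simp: slope_jump_def)
  then show False using assms(5) by contradiction
qed

lemma optimal_active_knot_off_piece:
  assumes opt: "optimal K N x y (v, w, b, a, c)" and "strictly_sorted N x" "N \<ge> 2" "K \<ge> N - 1"
    and "\<not> alignment_condition N x y" "k \<in> {1..K}" "v k \<noteq> 0" "i \<in> {1..N - 1}"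
  shows "(\<forall>t\<in>data_piece N x i. - w k * b k \<le> t) \<or> (\<forall>t\<in>data_piece N x i. t \<le> - w k * b k)"
proof -
  define p where "p = - w k * b k"
  note range = optimal_active_knot_range[OF opt assms(2-4,6,7), folded p_def]
  have "x 1 < x 2" using strictly_sorted_less[OF assms(2)] assms(3) by auto
  then have "N \<noteq> 2" using range by auto
  have "(1 < i \<and> p \<le> x i) \<or> (i < N - 1 \<and> x (Suc i) \<le> p)"
  proof (cases "i = 1 \<or> i = N - 1")
    case True
    then show ?thesis using \<open>N \<noteq> 2\<close> range assms(8) by (auto simp: numeral_2_eq_2)
  next
    case False
    then show ?thesis
      using optimal_active_knot_not_inside[OF opt assms(2-7), of i, folded p_def] assms(8) by fastforce
  qed
  then show ?thesis unfolding data_piece_def p_def[symmetric] by force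
qed

lemma relu_affine_on:
  assumes "\<bar>w\<bar> = 1" "(\<forall>t\<in>S. - w * b \<le> t) \<or> (\<forall>t\<in>S. t \<le> - w * b)"
  shows "\<exists>\<alpha> \<beta>. \<forall>t\<in>S. relu (w * t + b) = \<alpha> * t + \<beta>"
proof -
  have "(\<forall>t\<in>S. 0 \<le> w * t + b) \<or> (\<forall>t\<in>S. w * t + b \<le> 0)"
    using assms by (cases "w = 1") (auto simp: abs_if split: if_splits)
  then show ?thesis
  proof
    assume "\<forall>t\<in>S. 0 \<le> w * t + b"
    then show ?thesis unfolding relu_def by (intro exI[of _ w] exI[of _ b]) auto
  next
    assume "\<forall>t\<in>S. w * t + b \<le> 0"
    then show ?thesis unfolding relu_def by (intro exI[of _ 0] exI[of _ 0]) auto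
  qed
qed

lemma fnet_affine_on:
  fixes v :: "nat \<Rightarrow> real ^ 't::finite"
  assumes "\<And>k. k \<in> {1..K} \<Longrightarrow> v k \<noteq> 0 \<Longrightarrow>
      \<bar>w k\<bar> = 1 \<and> ((\<forall>t\<in>S. - w k * b k \<le> t) \<or> (\<forall>t\<in>S. t \<le> - w k * b k))"
  shows "\<exists>A C. \<forall>t\<in>S. fnet K (v, w, b, a, c) t = t *\<^sub>R A + C"
proof -
  have "\<exists>\<alpha> \<beta>. \<forall>t\<in>S. relu (w k * t + b k) *\<^sub>R v k = t *\<^sub>R \<alpha> + \<beta>" if k: "k \<in> {1..K}" for k
  proof (cases "v k = 0")
    case False
    then obtain \<alpha> \<beta> where "\<forall>t\<in>S. relu (w k * t + b k) = \<alpha> * t + \<beta>"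
      using relu_affine_on[of "w k" S "b k"] assms[OF k False] by blast
    then show ?thesis by (intro exI[of _ "\<alpha> *\<^sub>R v k"] exI[of _ "\<beta> *\<^sub>R v k"]) (simp add: scaleR_add_left)
  qed (auto intro: exI[of _ 0])
  then obtain \<alpha> \<beta> :: "nat \<Rightarrow> real ^ 't"
    where \<alpha>\<beta>: "\<And>k t. k \<in> {1..K} \<Longrightarrow> t \<in> S \<Longrightarrow> relu (w k * t + b k) *\<^sub>R v k = t *\<^sub>R \<alpha> k + \<beta> k"
    by metis
  have "fnet K (v, w, b, a, c) t = t *\<^sub>R ((\<Sum>k = 1..K. \<alpha> k) + a) + ((\<Sum>k = 1..K. \<beta> k) + c)"
    if "t \<in> S" for t
    unfolding fnet_def prod.case using \<alpha>\<beta>[OF _ that]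
    by (simp add: sum.distrib scaleR_sum_right algebra_simps)
  then show ?thesis by blast
qed

lemma affine_interpolation_slope:
  fixes g :: "real \<Rightarrow> real ^ 't::finite"
  assumes "\<forall>t\<in>S. g t = t *\<^sub>R A + C" "x i \<in> S" "x (Suc i) \<in> S" "t \<in> S" "x i \<noteq> x (Suc i)"
    and "g (x i) = y i" "g (x (Suc i)) = y (Suc i)"
  shows "g t = y i + (t - x i) *\<^sub>R slope x y i"
proof -
  have "y (Suc i) - y i = g (x (Suc i)) - g (x i)" using assms(6,7) by simp
  also have "\<dots> = (x (Suc i) - x i) *\<^sub>R A" using assms(1-3) by (simp add: algebra_simps)
  finally have "y (Suc i) - y i = (x (Suc i) - x i) *\<^sub>R A" .
  then have "slope x y i = A" unfolding slope_def using assms(5) by simp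
  then show ?thesis using assms(1,2,4,6) by (simp add: algebra_simps)
qed

lemma optimal_fnet_eq_connect_dots:
  assumes opt: "optimal K N x y \<theta>" and "strictly_sorted N x" "N \<ge> 2" "K \<ge> N - 1"
    and "\<not> alignment_condition N x y"
  shows "fnet K \<theta> = connect_dots N x y"
proof
  fix t
  obtain v w b a c where \<theta>: "\<theta> = (v, w, b, a, c)" by (cases \<theta>) auto
  note opt' = opt[unfolded \<theta>]
  note f = optimal_feasible[OF opt']
  obtain i where i: "i \<in> {1..N - 1}" "t \<in> data_piece N x i"
    using data_piece_index[OF assms(2,3)] by blast
  have "\<bar>w k\<bar> = 1 \<and> ((\<forall>s\<in>data_piece N x i. - w k * b k \<le> s) \<or> (\<forall>s\<in>data_piece N x i. s \<le> - w k * b k))"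
    if "k \<in> {1..K}" "v k \<noteq> 0" for k
    using feasible_unit_weight[OF f that(1)] optimal_active_knot_off_piece[OF opt' assms(2-5) that i(1)]
    by blast
  then obtain A C where affine: "\<forall>s\<in>data_piece N x i. fnet K (v, w, b, a, c) s = s *\<^sub>R A + C"
    using fnet_affine_on by blast
  have "x i < x (Suc i)" using strictly_sorted_less[OF assms(2)] i(1) by auto
  moreover have "fnet K (v, w, b, a, c) (x i) = y i" "fnet K (v, w, b, a, c) (x (Suc i)) = y (Suc i)"
    using f i(1) unfolding feasible_def by auto
  ultimately have "fnet K \<theta> t = y i + (t - x i) *\<^sub>R slope x y i"
    unfolding \<theta> using affine_interpolation_slope[OF affine data_piece_endpoints[OF assms(2) i(1)] i(2)]
    by simp
  then show "fnet K \<theta> t = connect_dots N x y t"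
    unfolding connect_dots_eq_hinge_interpolant[OF assms(2,3)] hinge_interpolant_on_piece[OF assms(2) i]
    .
qed

section \<open>Merging aligned kinks\<close>

lemma sum_update_two:
  fixes F G :: "'i \<Rightarrow> 'a::ab_group_add"
  assumes "finite A" "i \<in> A" "j \<in> A" "i \<noteq> j" "\<And>k. k \<in> A \<Longrightarrow> k \<noteq> i \<Longrightarrow> k \<noteq> j \<Longrightarrow> G k = F k"
  shows "sum G A = sum F A + (G i - F i) + (G j - F j)"
proof -
  have split: "sum H A = sum H (A - {i, j}) + H i + H j" for H :: "'i \<Rightarrow> 'a"
    using sum.subset_diff[of "{i, j}" A H] assms(1-4) by (simp add: algebra_simps)
  have "sum G (A - {i, j}) = sum F (A - {i, j})" using assms(5) by (intro sum.cong) auto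
  then show ?thesis using split[of F] split[of G] by (simp add: algebra_simps)
qed

definition merge_neurons :: "nat \<Rightarrow> real \<Rightarrow> ('t::finite) param \<Rightarrow> 't param" where
  "merge_neurons i b' \<theta> = (case \<theta> of (v, w, b, a, c) \<Rightarrow>
     (v(i := v i + v (Suc i), Suc i := 0), w, b(i := b'), a, c))"

lemma fnet_merge_neurons:
  assumes "i \<in> {1..K}" "Suc i \<in> {1..K}"
  shows "fnet K (merge_neurons i b' (v, w, b, a, c)) t = fnet K (v, w, b, a, c) t
    + relu (w i * t + b') *\<^sub>R (v i + v (Suc i)) - relu (w i * t + b i) *\<^sub>R v i
    - relu (w (Suc i) * t + b (Suc i)) *\<^sub>R v (Suc i)"
  unfolding fnet_def merge_neurons_def prod.case
  using sum_update_two[OF finite_atLeastAtMost assms, of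
      "\<lambda>k. relu (w k * t + (b(i := b')) k) *\<^sub>R (v(i := v i + v (Suc i), Suc i := 0)) k"
      "\<lambda>k. relu (w k * t + b k) *\<^sub>R v k"]
  by (simp add: algebra_simps)

lemma cost_merge_neurons:
  assumes "i \<in> {1..K}" "Suc i \<in> {1..K}"
  shows "cost K (merge_neurons i b' (v, w, b, a, c))
    = cost K (v, w, b, a, c) + norm (v i + v (Suc i)) - norm (v i) - norm (v (Suc i))"
  unfolding cost_def merge_neurons_def prod.case
  using sum_update_two[OF finite_atLeastAtMost assms, of
      "\<lambda>k. norm ((v(i := v i + v (Suc i), Suc i := 0)) k)" "\<lambda>k. norm (v k)"]
  by simp

text \<open>The merged knot \<open>q\<close> is chosen so that \<open>(u1 - q) *\<^sub>R D1 + (u2 - q) *\<^sub>R D2 = 0\<close>.\<close>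

lemma merge_aligned_hinges:
  fixes D1 D2 :: "'a::real_inner"
  assumes "u1 < u2" "D1 \<noteq> 0" "D2 \<noteq> 0" "D1 \<bullet> D2 = norm D1 * norm D2"
  obtains q where "u1 < q" "q < u2"
    "\<And>t. t \<le> u1 \<or> u2 \<le> t \<Longrightarrow>
      relu (t - q) *\<^sub>R (D1 + D2) = relu (t - u1) *\<^sub>R D1 + relu (t - u2) *\<^sub>R D2"
proof
  define \<alpha> \<beta> where "\<alpha> = norm D1" and "\<beta> = norm D2"
  define q where "q = (\<alpha> * u1 + \<beta> * u2) / (\<alpha> + \<beta>)"
  have pos: "\<alpha> > 0" "\<beta> > 0" using assms(2,3) unfolding \<alpha>_def \<beta>_def by auto
  have parallel: "\<alpha> *\<^sub>R D2 = \<beta> *\<^sub>R D1"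
    using assms(4) norm_cauchy_schwarz_eq unfolding \<alpha>_def \<beta>_def by blast
  define r where "r = (u2 - u1) / (\<alpha> + \<beta>)"
  have r: "r > 0" unfolding r_def using pos assms(1) by simp
  have q: "u1 - q = - (r * \<beta>)" "u2 - q = r * \<alpha>"
    unfolding q_def r_def using pos by (simp_all add: field_simps)
  then show "u1 < q" "q < u2" using pos r by (smt (verit) mult_pos_pos)+
  have "(u1 - q) *\<^sub>R D1 + (u2 - q) *\<^sub>R D2 = r *\<^sub>R (\<alpha> *\<^sub>R D2 - \<beta> *\<^sub>R D1)"
    unfolding q by (simp add: scaleR_diff_right)
  then have cancel: "(u1 - q) *\<^sub>R D1 + (u2 - q) *\<^sub>R D2 = 0" unfolding parallel by simp
  fix t assume "t \<le> u1 \<or> u2 \<le> t"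
  then consider "t \<le> u1" | "u2 \<le> t" by blast
  then show "relu (t - q) *\<^sub>R (D1 + D2) = relu (t - u1) *\<^sub>R D1 + relu (t - u2) *\<^sub>R D2"
  proof cases
    case 1
    then show ?thesis using \<open>u1 < q\<close> assms(1) unfolding relu_def by simp
  next
    case 2
    then have "relu (t - q) *\<^sub>R (D1 + D2) - (relu (t - u1) *\<^sub>R D1 + relu (t - u2) *\<^sub>R D2)
        = (u1 - q) *\<^sub>R D1 + (u2 - q) *\<^sub>R D2"
      using \<open>q < u2\<close> assms(1) unfolding relu_def by (simp add: algebra_simps)
    then show ?thesis using cancel by simp
  qed
qed

lemma merged_connect_dots_net:
  fixes x :: "nat \<Rightarrow> real" and y :: "nat \<Rightarrow> real ^ 't::finite"
  assumes "i \<in> {2..N - 2}" "K \<ge> N - 1"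
  defines "\<theta> \<equiv> connect_dots_net N x y"
  shows "fnet K (merge_neurons i (- q) \<theta>) t = fnet K \<theta> t
      + relu (t - q) *\<^sub>R (slope_jump x y i + slope_jump x y (Suc i))
      - relu (t - x i) *\<^sub>R slope_jump x y i - relu (t - x (Suc i)) *\<^sub>R slope_jump x y (Suc i)"
    and "cost K (merge_neurons i (- q) \<theta>) = total_jump N x y
      + norm (slope_jump x y i + slope_jump x y (Suc i))
      - norm (slope_jump x y i) - norm (slope_jump x y (Suc i))"
    and "case merge_neurons i (- q) \<theta> of (v, w, b, a, c) \<Rightarrow> \<forall>k \<in> {1..K}. \<bar>w k\<bar> = 1"
proof -
  have iK: "i \<in> {1..K}" "Suc i \<in> {1..K}" using assms(1,2) by auto
  have interior: "i \<in> {2..N - 1}" "Suc i \<in> {2..N - 1}" using assms(1) by auto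
  show "fnet K (merge_neurons i (- q) \<theta>) t = fnet K \<theta> t
      + relu (t - q) *\<^sub>R (slope_jump x y i + slope_jump x y (Suc i))
      - relu (t - x i) *\<^sub>R slope_jump x y i - relu (t - x (Suc i)) *\<^sub>R slope_jump x y (Suc i)"
    unfolding \<theta>_def connect_dots_net_def fnet_merge_neurons[OF iK] using interior by simp
  have "cost K (merge_neurons i (- q) \<theta>) = cost K \<theta> + norm (slope_jump x y i + slope_jump x y (Suc i))
      - norm (slope_jump x y i) - norm (slope_jump x y (Suc i))"
    unfolding \<theta>_def connect_dots_net_def cost_merge_neurons[OF iK] using interior by simp
  then show "cost K (merge_neurons i (- q) \<theta>) = total_jump N x y
      + norm (slope_jump x y i + slope_jump x y (Suc i))
      - norm (slope_jump x y i) - norm (slope_jump x y (Suc i))"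
    unfolding \<theta>_def cost_connect_dots_net[OF assms(2)] .
  show "case merge_neurons i (- q) \<theta> of (v, w, b, a, c) \<Rightarrow> \<forall>k \<in> {1..K}. \<bar>w k\<bar> = 1"
    unfolding \<theta>_def merge_neurons_def connect_dots_net_def by simp
qed

lemma nonunique_of_alignment_condition:
  assumes "strictly_sorted N x" "N \<ge> 2" "K \<ge> N - 1" "alignment_condition N x y"
  shows "nonunique K N x y"
proof -
  obtain i where i: "i \<in> {2..N - 2}"
    and D1: "slope_jump x y i \<noteq> 0" and D2: "slope_jump x y (Suc i) \<noteq> 0"
    and aligned: "aligned (slope_jump x y i) (slope_jump x y (Suc i))"
    using assms(4) unfolding alignment_condition_def slope_jump_def by auto
  then have norm_sum: "norm (slope_jump x y i + slope_jump x y (Suc i))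
      = norm (slope_jump x y i) + norm (slope_jump x y (Suc i))"
    using norm_cauchy_schwarz_eq norm_triangle_eq unfolding aligned_def by blast
  have "x i < x (Suc i)" using strictly_sorted_less[OF assms(1)] i by auto
  then obtain q where q: "x i < q" "q < x (Suc i)"
    and merge: "\<And>t. t \<le> x i \<or> x (Suc i) \<le> t \<Longrightarrow>
      relu (t - q) *\<^sub>R (slope_jump x y i + slope_jump x y (Suc i))
        = relu (t - x i) *\<^sub>R slope_jump x y i + relu (t - x (Suc i)) *\<^sub>R slope_jump x y (Suc i)"
    using merge_aligned_hinges[OF _ D1 D2 aligned[unfolded aligned_def]] by blast
  define \<theta> where "\<theta> = connect_dots_net N x y"
  define \<theta>' where "\<theta>' = merge_neurons i (- q) \<theta>"
  note merged = merged_connect_dots_net[OF i assms(3), where x = x and y = y and q = q,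
      folded \<theta>_def \<theta>'_def]
  have "fnet K \<theta>' (x j) = y j" if j: "j \<in> {1..N}" for j
  proof -
    have "x j \<le> x i \<or> x (Suc i) \<le> x j"
      using strictly_sorted_le[OF assms(1), of j i] strictly_sorted_le[OF assms(1), of "Suc i" j] i j
      by (cases "j \<le> i") auto
    moreover have "fnet K \<theta> (x j) = y j"
      using feasible_connect_dots_net[OF assms(1-3), where y = y] j unfolding feasible_def \<theta>_def by blast
    ultimately show ?thesis using merged(1) merge by simp
  qed
  then have "feasible K N x y \<theta>'" unfolding feasible_def using merged(3) by blast
  moreover have "cost K \<theta>' = total_jump N x y" using merged(2) norm_sum by simp
  ultimately have "optimal K N x y \<theta>'" by (rule optimal_if_cost_eq_total_jump[OF _ assms(1,2)])
  have "relu (q - q) = 0" "relu (q - x i) = q - x i" "relu (q - x (Suc i)) = 0"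
    using q unfolding relu_def by auto
  then have "fnet K \<theta>' q = fnet K \<theta> q - (q - x i) *\<^sub>R slope_jump x y i"
    using merged(1)[of q] by simp
  moreover have "(q - x i) *\<^sub>R slope_jump x y i \<noteq> 0" using q D1 by simp
  ultimately have "fnet K \<theta>' \<noteq> fnet K \<theta>" by (metis diff_0_right diff_left_imp_eq)
  with \<open>optimal K N x y \<theta>'\<close> show ?thesis
    unfolding nonunique_def \<theta>_def using optimal_connect_dots_net[OF assms(1-3)] by blast
qed

lemma nonunique_iff_alignment_condition:
  assumes "strictly_sorted N x" "N \<ge> 2" "K \<ge> N - 1"
  shows "nonunique K N x y \<longleftrightarrow> alignment_condition N x y"
  using nonunique_of_alignment_condition[OF assms] optimal_fnet_eq_connect_dots[OF _ assms]
  unfolding nonunique_def by metis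

section \<open>Data with non-unique solutions form a null set\<close>

lemma hyperplane_null_sets:
  fixes a :: "'a::euclidean_space"
  assumes "a \<noteq> 0"
  shows "{u. a \<bullet> u = r} \<in> null_sets lborel"
proof -
  have "{u. a \<bullet> u = r} \<in> null_sets lebesgue"
    using negligible_hyperplane[of a r] assms negligible_iff_null_sets by blast
  moreover have "{u. a \<bullet> u = r} \<in> sets lborel" by measurable
  ultimately show ?thesis using null_sets_completion_iff by blast
qed

text \<open>This is where \<open>T > 1\<close> is needed: a vector aligned with \<open>D\<close> is orthogonal to any
  \<open>e \<perp> D\<close>, which confines \<open>u\<close> to a hyperplane.\<close>

lemma aligned_affine_null:
  fixes D :: "real ^ 't::finite"
  assumes "CARD('t) > 1" "D \<noteq> 0" "c \<noteq> 0"
  shows "\<exists>H \<in> null_sets lborel. {u. aligned D (c *\<^sub>R u - s)} \<subseteq> H"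
proof -
  obtain e :: "real ^ 't" where e: "e \<noteq> 0" "orthogonal D e"
    using orthogonal_to_vector_exists[of D] assms(1) by auto
  have "e \<bullet> u = (e \<bullet> s) / c" if "aligned D (c *\<^sub>R u - s)" for u
  proof -
    define z where "z = c *\<^sub>R u - s"
    have "D \<bullet> z = norm D * norm z" using that unfolding aligned_def z_def .
    then have "norm D *\<^sub>R z = norm z *\<^sub>R D" by (simp only: norm_cauchy_schwarz_eq)
    then have "e \<bullet> (norm D *\<^sub>R z) = e \<bullet> (norm z *\<^sub>R D)" by simp
    then have "norm D * (e \<bullet> z) = norm z * (e \<bullet> D)" by (simp only: inner_scaleR_right)
    moreover have "e \<bullet> D = 0" using e(2) by (simp add: orthogonal_def inner_commute)
    ultimately have "e \<bullet> z = 0" using assms(2) by simp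
    then have "c * (e \<bullet> u) = e \<bullet> s" unfolding z_def by (simp add: inner_diff_right)
    then show ?thesis using assms(3) by (simp add: field_simps)
  qed
  then have "{u. aligned D (c *\<^sub>R u - s)} \<subseteq> {u. e \<bullet> u = (e \<bullet> s) / c}" by blast
  then show ?thesis by (rule bexI[OF _ hyperplane_null_sets[OF e(1)]])
qed

lemma (in sigma_finite_measure) null_sets_pair_measure_if_sections:
  assumes "A \<in> sets (N \<Otimes>\<^sub>M M)" "\<And>x. Pair x -` A \<in> null_sets M"
  shows "A \<in> null_sets (N \<Otimes>\<^sub>M M)"
proof -
  have "emeasure (N \<Otimes>\<^sub>M M) A = (\<integral>\<^sup>+x. emeasure M (Pair x -` A) \<partial>N)"
    by (rule emeasure_pair_measure_alt[OF assms(1)])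
  also have "\<dots> = 0" using null_setsD1[OF assms(2)] by simp
  finally show ?thesis using assms(1) by (rule null_setsI)
qed

lemma null_sets_PiM_lborel_if_slices:
  fixes A :: "('i \<Rightarrow> 'a::euclidean_space) set"
  assumes "finite I" "j \<in> I" "A \<in> sets (\<Pi>\<^sub>M i\<in>I. lborel)"
    and "\<And>z. \<exists>H \<in> null_sets lborel. {u. z(j := u) \<in> A} \<subseteq> H"
  shows "A \<in> null_sets (\<Pi>\<^sub>M i\<in>I. lborel)"
proof -
  interpret product_sigma_finite "\<lambda>_. lborel :: 'a measure" by standard
  define J where "J = I - {j}"
  have I: "I = insert j J" "finite J" "j \<notin> J" unfolding J_def using assms(1,2) by auto
  have slice: "(\<integral>\<^sup>+ u. indicator A (z(j := u)) \<partial>lborel) = 0" for z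
  proof -
    obtain H where H: "H \<in> null_sets lborel" "{u. z(j := u) \<in> A} \<subseteq> H" using assms(4) by blast
    have "(\<integral>\<^sup>+ u. indicator A (z(j := u)) \<partial>lborel) \<le> (\<integral>\<^sup>+ u. indicator H u \<partial>lborel)"
      using H(2) by (intro nn_integral_mono) (auto simp: indicator_def)
    also have "\<dots> = 0" using H(1) by (subst nn_integral_indicator) auto
    finally show ?thesis by simp
  qed
  have "emeasure (\<Pi>\<^sub>M i\<in>I. lborel) A = (\<integral>\<^sup>+ z. indicator A z \<partial>(\<Pi>\<^sub>M i\<in>I. lborel))"
    using assms(3) by simp
  also have "\<dots> = (\<integral>\<^sup>+ z. (\<integral>\<^sup>+ u. indicator A (z(j := u)) \<partial>lborel) \<partial>(\<Pi>\<^sub>M i\<in>J. lborel))"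
    using assms(3) unfolding I(1) by (intro product_nn_integral_insert I(2,3)) simp
  also have "\<dots> = 0" by (simp add: slice)
  finally show ?thesis using assms(3) by (intro null_setsI)
qed

lemma measurable_data_x:
  "j \<in> {1..N} \<Longrightarrow> (\<lambda>\<omega>. fst \<omega> j)
    \<in> borel_measurable (data_measure N :: ((nat \<Rightarrow> real) \<times> (nat \<Rightarrow> real ^ 't::finite)) measure)"
  unfolding data_measure_def by (intro measurable_fst'') measurable

lemma measurable_data_y:
  "j \<in> {1..N} \<Longrightarrow> (\<lambda>\<omega>. snd \<omega> j)
    \<in> borel_measurable (data_measure N :: ((nat \<Rightarrow> real) \<times> (nat \<Rightarrow> real ^ 't::finite)) measure)"
  unfolding data_measure_def by (intro measurable_snd'') measurable

lemma measurable_data_slope_jump: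
  assumes "2 \<le> j" "Suc j \<le> N"
  shows "(\<lambda>\<omega>. slope_jump (fst \<omega>) (snd \<omega>) j)
    \<in> borel_measurable (data_measure N :: ((nat \<Rightarrow> real) \<times> (nat \<Rightarrow> real ^ 't::finite)) measure)"
proof -
  have "j - 1 \<in> {1..N}" "j \<in> {1..N}" "Suc j \<in> {1..N}" "Suc (j - 1) = j" using assms by auto
  note [measurable] =
    measurable_data_x[OF this(1)] measurable_data_x[OF this(2)] measurable_data_x[OF this(3)]
    measurable_data_y[OF this(1), where 't = 't] measurable_data_y[OF this(2), where 't = 't]
    measurable_data_y[OF this(3), where 't = 't]
  show ?thesis unfolding slope_jump_def slope_def \<open>Suc (j - 1) = j\<close> by measurable
qed

text \<open>The condition \<open>x (i + 2) \<noteq> x (i + 1)\<close> makes \<open>slope_jump x y (i + 1)\<close> an injective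
  affine function of \<open>y (i + 2)\<close>.\<close>

definition aligned_jump_data :: "nat \<Rightarrow> nat \<Rightarrow> ((nat \<Rightarrow> real) \<times> (nat \<Rightarrow> real ^ 't::finite)) set" where
  "aligned_jump_data N i = {(x, y) \<in> space (data_measure N). x (Suc (Suc i)) \<noteq> x (Suc i) \<and>
     slope_jump x y i \<noteq> 0 \<and> aligned (slope_jump x y i) (slope_jump x y (Suc i))}"

lemma aligned_jump_data_sets:
  assumes "i \<in> {2..N - 2}"
  shows "(aligned_jump_data N i :: ((nat \<Rightarrow> real) \<times> (nat \<Rightarrow> real ^ 't::finite)) set)
    \<in> sets (data_measure N)"
proof -
  let ?M = "data_measure N :: ((nat \<Rightarrow> real) \<times> (nat \<Rightarrow> real ^ 't)) measure"
  let ?J = "\<lambda>j \<omega>. slope_jump (fst \<omega>) (snd \<omega>) j"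
  have "Suc (Suc i) \<in> {1..N}" "Suc i \<in> {1..N}" using assms by auto
  note [measurable] = measurable_data_x[OF this(1)] measurable_data_x[OF this(2)]
  have "2 \<le> i" "Suc i \<le> N" "2 \<le> Suc i" "Suc (Suc i) \<le> N" using assms by auto
  note J = measurable_data_slope_jump[OF this(1,2)] measurable_data_slope_jump[OF this(3,4)]
  have "Measurable.pred ?M (\<lambda>\<omega>. fst \<omega> (Suc (Suc i)) = fst \<omega> (Suc i))" by measurable
  moreover have "Measurable.pred ?M (\<lambda>\<omega>. ?J i \<omega> = 0)"
    unfolding pred_def by (rule measurable_equality_set[OF J(1)]) simp
  moreover have "Measurable.pred ?M (\<lambda>\<omega>. ?J i \<omega> \<bullet> ?J (Suc i) \<omega> = norm (?J i \<omega>) * norm (?J (Suc i) \<omega>))"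
    unfolding pred_def
    by (intro measurable_equality_set borel_measurable_times borel_measurable_inner J
        measurable_compose[OF J(1) borel_measurable_norm]
        measurable_compose[OF J(2) borel_measurable_norm])
  ultimately have "Measurable.pred ?M (\<lambda>\<omega>. fst \<omega> (Suc (Suc i)) \<noteq> fst \<omega> (Suc i) \<and>
      ?J i \<omega> \<noteq> 0 \<and> aligned (?J i \<omega>) (?J (Suc i) \<omega>))"
    unfolding aligned_def by (intro pred_intros_logic)
  moreover have "aligned_jump_data N i = {\<omega> \<in> space ?M. fst \<omega> (Suc (Suc i)) \<noteq> fst \<omega> (Suc i) \<and>
      ?J i \<omega> \<noteq> 0 \<and> aligned (?J i \<omega>) (?J (Suc i) \<omega>)}"
    unfolding aligned_jump_data_def by auto
  ultimately show ?thesis unfolding pred_def by simp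
qed

lemma slope_jump_update:
  "slope_jump x (y(Suc (Suc i) := u)) i = slope_jump x y i"
proof -
  have "i - 1 \<noteq> Suc (Suc i)" "i - 1 \<noteq> Suc i" by arith+
  then show ?thesis unfolding slope_jump_def slope_def by simp
qed

lemma slope_jump_update_next:
  "slope_jump x (y(Suc (Suc i) := u)) (Suc i)
    = (1 / (x (Suc (Suc i)) - x (Suc i))) *\<^sub>R u
      - ((1 / (x (Suc (Suc i)) - x (Suc i))) *\<^sub>R y (Suc i) + slope x y i)"
  unfolding slope_jump_def slope_def by (simp add: scaleR_diff_right)

lemma aligned_slope_jumps_slice_null:
  fixes z :: "nat \<Rightarrow> real ^ 't::finite"
  assumes "CARD('t) > 1" "x (Suc (Suc i)) \<noteq> x (Suc i)"
  shows "\<exists>H \<in> null_sets lborel. {u. slope_jump x (z(Suc (Suc i) := u)) i \<noteq> 0 \<and>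
    aligned (slope_jump x (z(Suc (Suc i) := u)) i) (slope_jump x (z(Suc (Suc i) := u)) (Suc i))} \<subseteq> H"
proof (cases "slope_jump x z i = 0")
  case True
  then show ?thesis unfolding slope_jump_update by (intro bexI[of _ "{}"]) simp_all
next
  case False
  define c where "c = 1 / (x (Suc (Suc i)) - x (Suc i))"
  have "c \<noteq> 0" unfolding c_def using assms(2) by simp
  then obtain H where H: "H \<in> null_sets lborel"
    "{u. aligned (slope_jump x z i) (c *\<^sub>R u - (c *\<^sub>R z (Suc i) + slope x z i))} \<subseteq> H"
    using aligned_affine_null[OF assms(1) False] by blast
  show ?thesis
    unfolding slope_jump_update slope_jump_update_next c_def[symmetric]
    by (rule bexI[OF _ H(1)]) (use H(2) in blast)
qed

lemma aligned_jump_data_null: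
  assumes "CARD('t::finite) > 1" "i \<in> {2..N - 2}"
  shows "(aligned_jump_data N i :: ((nat \<Rightarrow> real) \<times> (nat \<Rightarrow> real ^ 't)) set)
    \<in> null_sets (data_measure N)"
proof -
  define Mx where "Mx = (\<Pi>\<^sub>M i\<in>{1..N}. lborel :: real measure)"
  define My where "My = (\<Pi>\<^sub>M i\<in>{1..N}. lborel :: (real ^ 't) measure)"
  define Z where "Z = (aligned_jump_data N i :: ((nat \<Rightarrow> real) \<times> (nat \<Rightarrow> real ^ 't)) set)"
  interpret product_sigma_finite "\<lambda>_. lborel :: (real ^ 't) measure" by standard
  interpret My: sigma_finite_measure My unfolding My_def by (rule sigma_finite) simp
  have Z: "Z \<in> sets (Mx \<Otimes>\<^sub>M My)"
    using aligned_jump_data_sets[OF assms(2)] unfolding Z_def Mx_def My_def data_measure_def .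
  have "Pair x -` Z \<in> null_sets My" for x
  proof (cases "x (Suc (Suc i)) = x (Suc i)")
    case True
    then have "Pair x -` Z = {}" unfolding Z_def aligned_jump_data_def by auto
    then show ?thesis by simp
  next
    case False
    have "\<exists>H \<in> null_sets lborel. {u. z(Suc (Suc i) := u) \<in> Pair x -` Z} \<subseteq> H" for z
    proof -
      let ?A = "{u. slope_jump x (z(Suc (Suc i) := u)) i \<noteq> 0 \<and>
        aligned (slope_jump x (z(Suc (Suc i) := u)) i) (slope_jump x (z(Suc (Suc i) := u)) (Suc i))}"
      have "{u. z(Suc (Suc i) := u) \<in> Pair x -` Z} \<subseteq> ?A"
        unfolding Z_def aligned_jump_data_def by (simp add: Collect_mono)
      moreover obtain H where "H \<in> null_sets lborel" "?A \<subseteq> H"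
        using aligned_slope_jumps_slice_null[OF assms(1) False, of z] by blast
      ultimately show ?thesis by (meson order.trans)
    qed
    moreover have "Suc (Suc i) \<in> {1..N}" using assms(2) by auto
    ultimately show ?thesis
      unfolding My_def
      by (intro null_sets_PiM_lborel_if_slices[of "{1..N}" "Suc (Suc i)"]
          sets_Pair1[OF Z[unfolded My_def]]) auto
  qed
  then have "Z \<in> null_sets (Mx \<Otimes>\<^sub>M My)" by (rule My.null_sets_pair_measure_if_sections[OF Z])
  then show ?thesis unfolding Z_def Mx_def My_def data_measure_def .
qed

lemma nonunique_data_null:
  assumes "CARD('t::finite) > 1" "N \<ge> 2" "K \<ge> N - 1"
  shows "\<exists>B \<in> null_sets (data_measure N :: ((nat \<Rightarrow> real) \<times> (nat \<Rightarrow> real ^ 't)) measure).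
    {(x', y') \<in> space (data_measure N :: ((nat \<Rightarrow> real) \<times> (nat \<Rightarrow> real ^ 't)) measure).
       strictly_sorted N x' \<and> nonunique K N x' y'} \<subseteq> B"
proof
  let ?B = "\<Union>i\<in>{2..N - 2}. aligned_jump_data N i :: ((nat \<Rightarrow> real) \<times> (nat \<Rightarrow> real ^ 't)) set"
  show "?B \<in> null_sets (data_measure N)"
    using aligned_jump_data_null[OF assms(1)] by (intro null_sets.finite_UN) auto
  show "{(x', y') \<in> space (data_measure N). strictly_sorted N x' \<and> nonunique K N x' y'} \<subseteq> ?B"
  proof clarify
    fix x' :: "nat \<Rightarrow> real" and y' :: "nat \<Rightarrow> real ^ 't"
    assume "(x', y') \<in> space (data_measure N)" "strictly_sorted N x'" "nonunique K N x' y'"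
    moreover from this obtain i where "i \<in> {2..N - 2}" "slope_jump x' y' i \<noteq> 0"
      "aligned (slope_jump x' y' i) (slope_jump x' y' (Suc i))"
      using nonunique_iff_alignment_condition[OF _ assms(2,3)]
      unfolding alignment_condition_def slope_jump_def by fastforce
    moreover have "x' (Suc i) < x' (Suc (Suc i))"
      using strictly_sorted_less[OF \<open>strictly_sorted N x'\<close>] \<open>i \<in> {2..N - 2}\<close> by auto
    ultimately have "(x', y') \<in> aligned_jump_data N i" unfolding aligned_jump_data_def by auto
    then show "(x', y') \<in> ?B" by (rule UN_I[OF \<open>i \<in> {2..N - 2}\<close>])
  qed
qed

theorem theorem1:
  fixes N K :: nat and x :: "nat \<Rightarrow> real" and y :: "nat \<Rightarrow> real ^ 't::finite"
  assumes "N \<ge> 2" and "K \<ge> N ^ 2" and "strictly_sorted N x"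
  shows "is_solution K N x y (connect_dots N x y)
    \<and> (nonunique K N x y \<longleftrightarrow> alignment_condition N x y)
    \<and> (\<not> alignment_condition N x y \<longrightarrow>
         (\<forall>f. is_solution K N x y f \<longrightarrow> f = connect_dots N x y))
    \<and> (CARD('t) > 1 \<longrightarrow>
         (\<exists>B \<in> null_sets (data_measure N :: ((nat \<Rightarrow> real) \<times> (nat \<Rightarrow> real ^ 't)) measure).
            {(x', y') \<in> space (data_measure N :: ((nat \<Rightarrow> real) \<times> (nat \<Rightarrow> real ^ 't)) measure).
               strictly_sorted N x' \<and> nonunique K N x' y'} \<subseteq> B))"
proof -
  have K: "K \<ge> N - 1"
    using assms(2) power2_nat_le_imp_le[of N K] by linarith
  have "\<not> alignment_condition N x y \<Longrightarrow> is_solution K N x y f \<Longrightarrow> f = connect_dots N x y" for f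
    using optimal_fnet_eq_connect_dots[OF _ assms(3,1) K] unfolding is_solution_def by blast
  then show ?thesis
    using is_solution_connect_dots[OF assms(3,1) K] nonunique_iff_alignment_condition[OF assms(3,1) K]
      nonunique_data_null[OF _ assms(1) K] by blast
qed

end
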